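(* Let $\rho$ be the automorphism of $\mathcal A_\theta^{alg}$ with $\rho\cdot U_1=U_2^{-1}$, $\rho\cdot U_2=U_1$, generating a group $\mathbb Z_4$. Let $H^0(\mathcal A_\theta^{alg},{}_{\rho}\mathcal A_\theta^{alg\ast})$ be the space of formal series $\varphi=\sum\varphi_{n,m}U_1^nU_2^m$ with $(\rho\cdot a)\varphi=\varphi a$ for all $a\in\mathcal A_\theta^{alg}$, with $\mathbb Z_4$ acting by applying $\rho$ termwise. Then $H^0(\mathcal A_\theta^{alg},{}_{\rho}\mathcal A_\theta^{alg\ast})^{\mathbb Z_4}\cong\mathbb C^2$.
   Context: Let $\theta\in\mathbb R\setminus\mathbb Q$, $\lambda=e^{2\pi i\theta}$. $\mathcal A_\theta^{alg}$ is the complex algebra of finite sums $\sum a_{n,m}U_1^nU_2^m$ with $U_1,U_2$ invertible and $U_2U_1=\lambda U_1U_2$; formal series $\sum_{(n,m)\in\mathbb Z^2}\varphi_{n,m}U_1^nU_2^m$ with arbitrary coefficients form an $\mathcal A_\theta^{alg}$-bimodule via multiplication. Termwise action: $\rho\cdot\sum\varphi_{n,m}U_1^nU_2^m=\sum\varphi_{n,m}\,\rho\cdot(U_1^nU_2^m)$. *)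

theory Defs
  imports Complex_Main
begin

(* Formal series sum phi(n,m) U1^n U2^m are represented by their coefficient
   functions int x int => complex.  Convention: U2^a U1^b = lambda^(a*b) U1^b U2^a. *)

definition lam :: "real \<Rightarrow> complex" where
  "lam \<theta> = cis (2 * pi * \<theta>)"

definition Aalg :: "(int \<times> int \<Rightarrow> complex) set" where
  "Aalg = {a. finite {k. a k \<noteq> 0}}"

definition lmult :: "real \<Rightarrow> (int \<times> int \<Rightarrow> complex) \<Rightarrow> (int \<times> int \<Rightarrow> complex) \<Rightarrow> (int \<times> int \<Rightarrow> complex)" where
  "lmult \<theta> a \<phi> = (\<lambda>(p, q). \<Sum>(n, m)\<in>{k. a k \<noteq> 0}.
      a (n, m) * \<phi> (p - n, q - m) * lam \<theta> powi (m * (p - n)))"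

definition rmult :: "real \<Rightarrow> (int \<times> int \<Rightarrow> complex) \<Rightarrow> (int \<times> int \<Rightarrow> complex) \<Rightarrow> (int \<times> int \<Rightarrow> complex)" where
  "rmult \<theta> \<phi> a = (\<lambda>(p, q). \<Sum>(n, m)\<in>{k. a k \<noteq> 0}.
      \<phi> (p - n, q - m) * a (n, m) * lam \<theta> powi ((q - m) * n))"

(* termwise action of rho: rho(U1^n U2^m) = U2^(-n) U1^m = lambda^(-n m) U1^m U2^(-n) *)
definition rho :: "real \<Rightarrow> (int \<times> int \<Rightarrow> complex) \<Rightarrow> (int \<times> int \<Rightarrow> complex)" where
  "rho \<theta> \<phi> = (\<lambda>(p, q). lam \<theta> powi (q * p) * \<phi> (- q, p))"

definition H0rho :: "real \<Rightarrow> (int \<times> int \<Rightarrow> complex) set" where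
  "H0rho \<theta> = {\<phi>. \<forall>a\<in>Aalg. lmult \<theta> (rho \<theta> a) \<phi> = rmult \<theta> \<phi> a}"

definition H0rho_inv :: "real \<Rightarrow> (int \<times> int \<Rightarrow> complex) set" where
  "H0rho_inv \<theta> = {\<phi> \<in> H0rho \<theta>. rho \<theta> \<phi> = \<phi>}"

end

theory Submission
  imports Defs
begin

text \<open>Testing \<open>(\<rho>\<cdot>a) \<phi> = \<phi> a\<close> on the monomials \<open>a = U\<^sub>1\<^sup>n U\<^sub>2\<^sup>m\<close> shows, for \<open>n = 0\<close>,
  that the coefficient \<open>\<phi>\<^sub>x\<^sub>,\<^sub>y\<close> only depends on \<open>s = x + y\<close>, and then that
  \<open>\<psi>(s + 2n) = \<lambda>\<^bsup>n(s+n)\<^esup> \<psi>(s)\<close>; since \<open>n(s + n)\<close> is the increment of \<open>\<lfloor>s\<^sup>2/4\<rfloor>\<close>, this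
  forces \<open>\<psi>(s) = \<lambda>\<^bsup>\<lfloor>s\<^sup>2/4\<rfloor>\<^esup> \<psi>(s mod 2)\<close>, and conversely every such \<open>\<psi>\<close> works. So the
  invariant series form a plane spanned by the even and odd parts of
  \<open>\<Sum> \<lambda>\<^bsup>\<lfloor>(n+m)\<^sup>2/4\<rfloor>\<^esup> U\<^sub>1\<^sup>n U\<^sub>2\<^sup>m\<close>. The same increment formula shows that \<open>\<rho>\<close> fixes
  every such series, so passing to \<open>\<int>\<^sub>4\<close>-invariants changes nothing.\<close>

lemma lam_nonzero [simp]: "lam \<theta> \<noteq> 0"
  by (simp add: lam_def)

definition quad_phase :: "real \<Rightarrow> int \<Rightarrow> complex" where
  "quad_phase \<theta> s = lam \<theta> powi (s\<^sup>2 div 4)"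

lemma quad_phase_0_1 [simp]: "quad_phase \<theta> 0 = 1" "quad_phase \<theta> 1 = 1"
  by (simp_all add: quad_phase_def)

lemma quad_phase_shift:
  "quad_phase \<theta> (s + 2 * n) = lam \<theta> powi (n * (s + n)) * quad_phase \<theta> s"
proof -
  have "(s + 2 * n)\<^sup>2 div 4 = n * (s + n) + s\<^sup>2 div 4"
    by (simp add: power2_eq_square algebra_simps)
  then show ?thesis
    by (simp add: quad_phase_def power_int_add)
qed

lemma support_rho: "{k. rho \<theta> a k \<noteq> 0} = (\<lambda>(n, m). (m, - n)) ` {k. a k \<noteq> 0}"
  by (force simp: rho_def image_iff)

lemma lmult_rho_apply:
  "lmult \<theta> (rho \<theta> a) \<phi> (p, q) =
     (\<Sum>(n, m)\<in>{k. a k \<noteq> 0}. a (n, m) * \<phi> (p - m, q + n) * lam \<theta> powi (- n * p))"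
proof -
  have "inj_on (\<lambda>(n::int, m::int). (m, - n)) S" for S
    by (auto simp: inj_on_def)
  then have "lmult \<theta> (rho \<theta> a) \<phi> (p, q) =
      (\<Sum>(n, m)\<in>{k. a k \<noteq> 0}. rho \<theta> a (m, - n) * \<phi> (p - m, q + n) * lam \<theta> powi (- n * (p - m)))"
    by (simp add: lmult_def support_rho sum.reindex case_prod_unfold)
  also have "\<dots> = (\<Sum>(n, m)\<in>{k. a k \<noteq> 0}. a (n, m) * \<phi> (p - m, q + n) * lam \<theta> powi (- n * p))"
  proof (rule sum.cong, simp, clarify)
    fix n m :: int
    have "rho \<theta> a (m, - n) * \<phi> (p - m, q + n) * lam \<theta> powi (- n * (p - m)) =
        a (n, m) * \<phi> (p - m, q + n) * (lam \<theta> powi (- n * m) * lam \<theta> powi (- n * (p - m)))"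
      by (simp add: rho_def mult_ac)
    also have "lam \<theta> powi (- n * m) * lam \<theta> powi (- n * (p - m)) = lam \<theta> powi (- n * p)"
      by (simp add: power_int_add [symmetric] algebra_simps)
    finally show "rho \<theta> a (m, - n) * \<phi> (p - m, q + n) * lam \<theta> powi (- n * (p - m)) =
        a (n, m) * \<phi> (p - m, q + n) * lam \<theta> powi (- n * p)" .
  qed
  finally show ?thesis .
qed

lemma rmult_apply:
  "rmult \<theta> \<phi> a (p, q) =
     (\<Sum>(n, m)\<in>{k. a k \<noteq> 0}. a (n, m) * \<phi> (p - n, q - m) * lam \<theta> powi ((q - m) * n))"
  by (simp add: rmult_def mult_ac)

text \<open>The equation below compares the coefficients of \<open>U\<^sub>1\<^sup>p U\<^sub>2\<^sup>q\<close> in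
  \<open>(\<rho>\<cdot>U\<^sub>1\<^sup>n U\<^sub>2\<^sup>m) \<phi>\<close> and \<open>\<phi> U\<^sub>1\<^sup>n U\<^sub>2\<^sup>m\<close>.\<close>

lemma mem_H0rho_iff_monomials:
  "\<phi> \<in> H0rho \<theta> \<longleftrightarrow>
     (\<forall>n m p q. \<phi> (p - m, q + n) * lam \<theta> powi (- n * p) = \<phi> (p - n, q - m) * lam \<theta> powi ((q - m) * n))"
  (is "_ \<longleftrightarrow> (\<forall>n m p q. ?eq n m p q)")
proof
  assume H0: "\<phi> \<in> H0rho \<theta>"
  show "\<forall>n m p q. ?eq n m p q"
  proof (intro allI)
    fix n m p q :: int
    define a :: "int \<times> int \<Rightarrow> complex" where "a k = (if k = (n, m) then 1 else 0)" for k
    have supp: "{k. a k \<noteq> 0} = {(n, m)}"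
      by (auto simp: a_def)
    then have "a \<in> Aalg"
      by (simp add: Aalg_def)
    with H0 have "lmult \<theta> (rho \<theta> a) \<phi> (p, q) = rmult \<theta> \<phi> a (p, q)"
      by (simp add: H0rho_def)
    then show "?eq n m p q"
      unfolding lmult_rho_apply rmult_apply supp by (simp add: a_def)
  qed
next
  assume "\<forall>n m p q. ?eq n m p q"
  then show "\<phi> \<in> H0rho \<theta>"
    by (auto simp: H0rho_def fun_eq_iff lmult_rho_apply rmult_apply mult.assoc intro!: sum.cong)
qed

lemma mem_H0rho_iff:
  "\<phi> \<in> H0rho \<theta> \<longleftrightarrow> (\<forall>x y. \<phi> (x, y) = quad_phase \<theta> (x + y) * \<phi> ((x + y) mod 2, 0))"
proof
  assume "\<phi> \<in> H0rho \<theta>"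
  then have mono: "\<phi> (p - m, q + n) * lam \<theta> powi (- n * p) = \<phi> (p - n, q - m) * lam \<theta> powi ((q - m) * n)"
    for n m p q
    by (simp add: mem_H0rho_iff_monomials)
  have diagonal: "\<phi> (x, y) = \<phi> (x + y, 0)" for x y
    using mono [where n = 0 and m = y and p = "x + y" and q = y] by simp
  show "\<forall>x y. \<phi> (x, y) = quad_phase \<theta> (x + y) * \<phi> ((x + y) mod 2, 0)"
  proof (intro allI)
    fix x y :: int
    define r k where "r = (x + y) mod 2" and "k = (x + y) div 2"
    have "r \<in> {0, 1}" and sum: "x + y = r + 2 * k"
      by (auto simp: r_def k_def)
    have cancel: "lam \<theta> powi (k * (r + k)) * lam \<theta> powi (- k * (r + k)) = 1"
      by (simp add: power_int_add [symmetric])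
    have "\<phi> (r + k, k) = lam \<theta> powi (k * (r + k)) * (\<phi> (r + k, k) * lam \<theta> powi (- k * (r + k)))"
      by (simp only: cancel mult.left_commute [of _ "\<phi> (r + k, k)"] mult_1_right)
    also have "\<phi> (r + k, k) * lam \<theta> powi (- k * (r + k)) = \<phi> (r, 0)"
      using mono [where n = k and m = 0 and p = "r + k" and q = 0] by simp
    finally have "\<phi> (r + k, k) = lam \<theta> powi (k * (r + k)) * \<phi> (r, 0)" .
    moreover have "quad_phase \<theta> (r + 2 * k) = lam \<theta> powi (k * (r + k))"
      using \<open>r \<in> {0, 1}\<close> by (auto simp: quad_phase_shift)
    moreover have "\<phi> (x, y) = \<phi> (r + k, k)"
      using diagonal [of x y] diagonal [of "r + k" k] sum by (simp add: algebra_simps)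
    ultimately show "\<phi> (x, y) = quad_phase \<theta> (x + y) * \<phi> ((x + y) mod 2, 0)"
      unfolding r_def [symmetric] sum using \<open>r \<in> {0, 1}\<close> by auto
  qed
next
  assume form: "\<forall>x y. \<phi> (x, y) = quad_phase \<theta> (x + y) * \<phi> ((x + y) mod 2, 0)"
  show "\<phi> \<in> H0rho \<theta>"
    unfolding mem_H0rho_iff_monomials
  proof (intro allI)
    fix n m p q :: int
    define s where "s = p - n + (q - m)"
    have "p - m + (q + n) = s + 2 * n"
      by (simp add: s_def)
    then have "\<phi> (p - m, q + n) = quad_phase \<theta> (s + 2 * n) * \<phi> ((s + 2 * n) mod 2, 0)"
      using form [rule_format, of "p - m" "q + n"] by (simp only:)
    also have "\<dots> = lam \<theta> powi (n * (s + n)) * (quad_phase \<theta> s * \<phi> (s mod 2, 0))"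
      by (simp add: quad_phase_shift)
    also have "quad_phase \<theta> s * \<phi> (s mod 2, 0) = \<phi> (p - n, q - m)"
      using form [rule_format, of "p - n" "q - m"] by (simp add: s_def)
    finally have "\<phi> (p - m, q + n) * lam \<theta> powi (- n * p) =
        \<phi> (p - n, q - m) * (lam \<theta> powi (n * (s + n)) * lam \<theta> powi (- n * p))"
      by (simp add: mult_ac)
    also have "lam \<theta> powi (n * (s + n)) * lam \<theta> powi (- n * p) = lam \<theta> powi ((q - m) * n)"
      by (simp add: power_int_add [symmetric] s_def algebra_simps)
    finally show "\<phi> (p - m, q + n) * lam \<theta> powi (- n * p) = \<phi> (p - n, q - m) * lam \<theta> powi ((q - m) * n)" .
  qed
qed

lemma rho_fixes_H0rho:
  assumes "\<phi> \<in> H0rho \<theta>"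
  shows "rho \<theta> \<phi> = \<phi>"
proof (intro ext, clarify)
  fix p q :: int
  have form: "\<phi> (x, y) = quad_phase \<theta> (x + y) * \<phi> ((x + y) mod 2, 0)" for x y
    using assms unfolding mem_H0rho_iff by blast
  have shift: "p + q = (- q + p) + 2 * q"
    by simp
  have "quad_phase \<theta> (p + q) = lam \<theta> powi (q * p) * quad_phase \<theta> (- q + p)"
    unfolding shift quad_phase_shift by (simp add: algebra_simps)
  moreover have "(p + q) mod 2 = (- q + p) mod 2"
    unfolding shift by (rule mod_mult_self2)
  ultimately show "rho \<theta> \<phi> (p, q) = \<phi> (p, q)"
    using form [of "- q" p] form [of p q] by (simp add: rho_def)
qed

lemma H0rho_inv_eq_H0rho: "H0rho_inv \<theta> = H0rho \<theta>"
  using rho_fixes_H0rho by (auto simp: H0rho_inv_def)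

definition parity_series :: "real \<Rightarrow> complex \<Rightarrow> complex \<Rightarrow> int \<times> int \<Rightarrow> complex" where
  "parity_series \<theta> c d = (\<lambda>(x, y). quad_phase \<theta> (x + y) * (if even (x + y) then c else d))"

lemma parity_series_0_1 [simp]:
  "parity_series \<theta> c d (0, 0) = c" "parity_series \<theta> c d (1, 0) = d"
  by (simp_all add: parity_series_def)

lemma parity_series_mod_2 [simp]:
  "parity_series \<theta> c d (s mod 2, 0) = (if even s then c else d)"
  by (auto simp: parity_series_def even_iff_mod_2_eq_zero odd_iff_mod_2_eq_one)

lemma parity_series_mem_H0rho: "parity_series \<theta> c d \<in> H0rho \<theta>"
  by (simp add: mem_H0rho_iff) (simp add: parity_series_def)

lemma mem_H0rho_iff_parity_series: "\<phi> \<in> H0rho \<theta> \<longleftrightarrow> \<phi> = parity_series \<theta> (\<phi> (0, 0)) (\<phi> (1, 0))"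
proof
  assume "\<phi> \<in> H0rho \<theta>"
  then have form: "\<phi> (x, y) = quad_phase \<theta> (x + y) * \<phi> ((x + y) mod 2, 0)" for x y
    unfolding mem_H0rho_iff by blast
  have parity: "\<phi> (s mod 2, 0) = (if even s then \<phi> (0, 0) else \<phi> (1, 0))" for s :: int
    by (auto simp: even_iff_mod_2_eq_zero odd_iff_mod_2_eq_one)
  show "\<phi> = parity_series \<theta> (\<phi> (0, 0)) (\<phi> (1, 0))"
  proof (intro ext, clarify)
    fix x y :: int
    show "\<phi> (x, y) = parity_series \<theta> (\<phi> (0, 0)) (\<phi> (1, 0)) (x, y)"
      using form [of x y] parity [of "x + y"] by (simp add: parity_series_def)
  qed
next
  show "\<phi> = parity_series \<theta> (\<phi> (0, 0)) (\<phi> (1, 0)) \<Longrightarrow> \<phi> \<in> H0rho \<theta>"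
    by (metis parity_series_mem_H0rho)
qed

lemma parity_series_linear:
  "(\<lambda>k. c * parity_series \<theta> 1 0 k + d * parity_series \<theta> 0 1 k) = parity_series \<theta> c d"
  by (auto simp: parity_series_def fun_eq_iff)

theorem mainTheorem6:
  fixes \<theta> :: real
  assumes "\<theta> \<notin> \<rat>"
  shows "\<exists>\<phi>1 \<phi>2.
           (\<forall>c d :: complex. (\<lambda>k. c * \<phi>1 k + d * \<phi>2 k) \<in> H0rho_inv \<theta>) \<and>
           (\<forall>\<phi>\<in>H0rho_inv \<theta>. \<exists>!(c, d). \<phi> = (\<lambda>k. c * \<phi>1 k + d * \<phi>2 k))"
proof (intro exI conjI allI ballI)
  fix c d :: complex
  show "(\<lambda>k. c * parity_series \<theta> 1 0 k + d * parity_series \<theta> 0 1 k) \<in> H0rho_inv \<theta>"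
    by (simp add: parity_series_linear parity_series_mem_H0rho H0rho_inv_eq_H0rho)
next
  fix \<phi> assume "\<phi> \<in> H0rho_inv \<theta>"
  then have "\<phi> = parity_series \<theta> (\<phi> (0, 0)) (\<phi> (1, 0))"
    by (simp add: H0rho_inv_eq_H0rho mem_H0rho_iff_parity_series)
  then show "\<exists>!(c, d). \<phi> = (\<lambda>k. c * parity_series \<theta> 1 0 k + d * parity_series \<theta> 0 1 k)"
    unfolding parity_series_linear by (auto intro!: ex1I [of _ "(\<phi> (0, 0), \<phi> (1, 0))"])
qed

end
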